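(* Let $(\Omega,\mathcal A)$ be a measurable space and let $K:\Omega\to\mathcal K'(\mathbb C^n)$ be a random compact set. Then its polynomially convex hull $\widehat K$, defined by $\widehat K(\omega)=\widehat{K(\omega)}$, is a random compact set.
   Context: $\mathcal K'(\mathbb C^n)$ is the space of non-empty compact subsets of $\mathbb C^n$ with the Hausdorff distance and its Borel $\sigma$-algebra; a random compact set is a measurable map $\Omega\to\mathcal K'(\mathbb C^n)$. For a compact $L$, $\widehat L=\{z\in\mathbb C^n:|p(z)|\le\max_{x\in L}|p(x)| \text{ for all polynomials } p \text{ on } \mathbb C^n\}$. *)

theory Defs
  imports "HOL-Analysis.Analysis" "HOL-Probability.Probability"
begin

definition hausdist :: "'a::metric_space set \<Rightarrow> 'a set \<Rightarrow> real" where
  "hausdist A B = max (SUP x\<in>A. setdist {x} B) (SUP y\<in>B. setdist {y} A)"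

definition ncompacts :: "'a::metric_space set set" where
  "ncompacts = {L. compact L \<and> L \<noteq> {}}"

definition hausdorff_open :: "'a::metric_space set set \<Rightarrow> bool" where
  "hausdorff_open U \<longleftrightarrow> U \<subseteq> ncompacts \<and>
     (\<forall>L\<in>U. \<exists>e>0. \<forall>L'\<in>ncompacts. hausdist L L' < e \<longrightarrow> L' \<in> U)"

text \<open>K'(C^n) with its Borel sigma-algebra w.r.t. the Hausdorff metric.\<close>
definition Kspace :: "'a::metric_space set measure" where
  "Kspace = sigma ncompacts {U. hausdorff_open U}"

definition polynomial_fun :: "(complex ^ 'n \<Rightarrow> complex) \<Rightarrow> bool" where
  "polynomial_fun p \<longleftrightarrow> (\<exists>A c. finite (A :: ('n \<Rightarrow> nat) set) \<and>
     p = (\<lambda>z. \<Sum>\<alpha>\<in>A. c \<alpha> * (\<Prod>i\<in>UNIV. (z $ i) ^ (\<alpha> i))))"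

definition poly_hull :: "(complex ^ 'n) set \<Rightarrow> (complex ^ 'n) set" where
  "poly_hull L = {z. \<forall>p. polynomial_fun p \<longrightarrow> cmod (p z) \<le> (SUP x\<in>L. cmod (p x))}"

end

theory Submission
  imports Defs
begin

(*
  The map L \<mapsto> poly_hull L is upper hemicontinuous for the Hausdorff metric: the part of a
  large ball at distance \<ge> e from the hull of L is compact, hence cut off from L by finitely
  many strict polynomial inequalities sup_L |p| < t, and these persist for every L' that is
  Hausdorff-close to L.  Upper hemicontinuity makes L \<mapsto> hausdist C (poly_hull L) Borel for
  every finite C, one half of the defining maximum being lower and the other upper
  semicontinuous.  The Hausdorff balls with rational radii around finite subsets of a countable
  dense set form a countable base of K'(C^n), so these functions determine measurability.
*)

lemma cSUP_less_compact:
  fixes f :: "'a::topological_space \<Rightarrow> real"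
  assumes "compact S" "S \<noteq> {}" "continuous_on S f" "\<And>x. x \<in> S \<Longrightarrow> f x < t"
  shows "(SUP x\<in>S. f x) < t"
proof -
  obtain y where y: "y \<in> S" "\<forall>x\<in>S. f x \<le> f y"
    using continuous_attains_sup[OF assms(1-3)] by blast
  then have "(SUP x\<in>S. f x) \<le> f y"
    by (intro cSUP_least assms(2)) auto
  then show ?thesis
    using assms(4)[OF y(1)] by linarith
qed

section \<open>Hausdorff distance between compact sets\<close>

lemma bdd_above_setdist_image:
  fixes A :: "'a::metric_space set"
  assumes "compact A"
  shows "bdd_above ((\<lambda>x. setdist {x} B) ` A)"
  by (intro bounded_imp_bdd_above compact_imp_bounded compact_continuous_image
      continuous_on_setdist assms)

lemma hausdist_commute: "hausdist A B = hausdist B A"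
  unfolding hausdist_def by (simp add: max.commute)

lemma hausdist_lessE:
  fixes A :: "'a::metric_space set"
  assumes "A \<in> ncompacts" "B \<in> ncompacts" "hausdist A B < e" "x \<in> A"
  obtains y where "y \<in> B" "dist x y < e"
proof -
  have "setdist {x} B \<le> (SUP x\<in>A. setdist {x} B)"
    using assms(1,4) by (intro cSUP_upper bdd_above_setdist_image) (auto simp: ncompacts_def)
  also have "\<dots> \<le> hausdist A B"
    unfolding hausdist_def by simp
  finally have "setdist {x} B < e"
    using assms(3) by simp
  then show ?thesis
    using setdist_ltE[of "{x}" B e] assms(2) that by (auto simp: ncompacts_def)
qed

lemma hausdist_le:
  fixes A :: "'a::metric_space set"
  assumes "A \<noteq> {}" "B \<noteq> {}"
    and "\<And>x. x \<in> A \<Longrightarrow> \<exists>y\<in>B. dist x y \<le> b"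
    and "\<And>y. y \<in> B \<Longrightarrow> \<exists>x\<in>A. dist y x \<le> b"
  shows "hausdist A B \<le> b"
proof -
  have "setdist {x} T \<le> b" if "x \<in> S" "\<And>x. x \<in> S \<Longrightarrow> \<exists>y\<in>T. dist x y \<le> b" for x S T
    using that setdist_le_dist[of x "{x}" _ T] by fastforce
  then show ?thesis
    unfolding hausdist_def using assms by (auto intro!: cSUP_least)
qed

lemma hausdist_triangle_less:
  fixes A :: "'a::metric_space set"
  assumes "A \<in> ncompacts" "B \<in> ncompacts" "C \<in> ncompacts"
    and "hausdist A B < a" "hausdist B C < b"
  shows "hausdist A C \<le> a + b"
proof -
  have near: "\<exists>z\<in>Z. dist x z \<le> s + t"
    if XZ: "X \<in> ncompacts" "Z \<in> ncompacts" "x \<in> X" "hausdist X B < s" "hausdist B Z < t"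
    for X Z x s t
  proof -
    obtain y where "y \<in> B" "dist x y < s"
      using hausdist_lessE[of X B s x] XZ assms(2) by blast
    moreover obtain z where "z \<in> Z" "dist y z < t"
      using hausdist_lessE[of B Z t y] calculation XZ assms(2) by blast
    ultimately show ?thesis
      by (smt (verit) dist_triangle)
  qed
  have "hausdist C B < b" "hausdist B A < a"
    using assms(4,5) by (simp_all add: hausdist_commute)
  then show ?thesis
    using near[OF assms(1,3) _ assms(4,5)] near[OF assms(3,1), of _ b a] assms(1,3)
    by (intro hausdist_le) (auto simp: ncompacts_def add.commute)
qed

lemma finite_subset_hausdist_less:
  fixes L :: "'a::metric_space set"
  assumes dense: "\<And>X. open X \<Longrightarrow> X \<noteq> {} \<Longrightarrow> \<exists>d\<in>D. d \<in> X"
    and L: "L \<in> ncompacts" and e: "e > 0"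
  obtains C where "finite C" "C \<subseteq> D" "C \<noteq> {}" "hausdist C L < e"
proof -
  have "compact L" "L \<noteq> {}"
    using L by (auto simp: ncompacts_def)
  obtain F where F: "F \<subseteq> L" "finite F" "L \<subseteq> (\<Union>x\<in>F. ball x (e/4))"
    using compactE_image[OF \<open>compact L\<close>, of L "\<lambda>x. ball x (e/4)"] e by force
  then have "F \<noteq> {}"
    using \<open>L \<noteq> {}\<close> by auto
  have "\<exists>d\<in>D. dist f d < e/4" for f
    using dense[of "ball f (e/4)"] e by auto
  then obtain g where g: "\<And>f. g f \<in> D \<and> dist f (g f) < e/4"
    by metis
  have "hausdist (g ` F) L \<le> e/2"
  proof (rule hausdist_le)
    fix c assume "c \<in> g ` F"
    then obtain f where "f \<in> F" "c = g f" by auto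
    moreover have "dist (g f) f \<le> e/2"
      using g[of f] dist_commute[of "g f" f] zero_le_dist[of f "g f"] by linarith
    ultimately show "\<exists>y\<in>L. dist c y \<le> e/2"
      using F(1) by blast
  next
    fix y assume "y \<in> L"
    then obtain f where f: "f \<in> F" "dist y f < e/4"
      using F(3) by (auto simp: dist_commute)
    then have "dist y (g f) \<le> e/2"
      using g[of f] dist_triangle[of y "g f" f] by linarith
    with f show "\<exists>x\<in>g ` F. dist y x \<le> e/2" by blast
  qed (use \<open>F \<noteq> {}\<close> \<open>L \<noteq> {}\<close> in auto)
  then show ?thesis
    using that[of "g ` F"] F(2) \<open>F \<noteq> {}\<close> g e by auto
qed

lemma hausdist_near_subset_open:
  fixes L :: "'a::metric_space set"
  assumes "L \<in> ncompacts" "open U" "L \<subseteq> U"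
  obtains d where "d > 0" "\<And>L'. L' \<in> ncompacts \<Longrightarrow> hausdist L L' < d \<Longrightarrow> L' \<subseteq> U"
proof -
  obtain e where e: "e > 0" "(\<Union>x\<in>L. ball x e) \<subseteq> U"
    using compact_subset_open_imp_ball_epsilon_subset[of L U] assms by (auto simp: ncompacts_def)
  have "L' \<subseteq> U" if L': "L' \<in> ncompacts" "hausdist L L' < e" for L'
  proof
    fix y assume "y \<in> L'"
    moreover have "hausdist L' L < e"
      using L'(2) by (simp add: hausdist_commute)
    ultimately obtain x where "x \<in> L" "dist y x < e"
      using hausdist_lessE[OF L'(1) assms(1)] by blast
    then show "y \<in> U"
      using e(2) by (metis UN_subset_iff dist_commute mem_ball subsetD)
  qed
  then show ?thesis
    using that e(1) by blast
qed

section \<open>Measurable maps into the space of compact sets\<close>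

lemma space_Kspace: "space Kspace = ncompacts"
  unfolding Kspace_def by (simp add: space_measure_of_conv)

lemma sets_Kspace_hausdorff_open: "hausdorff_open U \<Longrightarrow> U \<in> sets Kspace"
  unfolding Kspace_def
  by (subst sets_measure_of) (auto simp: hausdorff_open_def intro: sigma_sets.Basic)

lemma hausdorff_open_countable_ball_Union:
  fixes U :: "'a::{metric_space,second_countable_topology} set set"
  assumes "hausdorff_open U"
  obtains I where "countable I" "\<And>C r. (C, r) \<in> I \<Longrightarrow> finite C \<and> C \<noteq> {}"
    and "U = (\<Union>(C, r)\<in>I. {L\<in>ncompacts. hausdist C L < r})"
proof -
  obtain D :: "'a set" where D: "countable D" "\<And>X. open X \<Longrightarrow> X \<noteq> {} \<Longrightarrow> \<exists>d\<in>D. d \<in> X"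
    using countable_dense_setE by blast
  define I where "I = {(C, r). finite C \<and> C \<subseteq> D \<and> C \<noteq> {} \<and> r \<in> \<rat> \<and>
                               {L\<in>ncompacts. hausdist C L < r} \<subseteq> U}"
  have "countable I"
    by (rule countable_subset[of _ "{C. finite C \<and> C \<subseteq> D} \<times> \<rat>"])
      (auto simp: I_def countable_Collect_finite_subset[OF D(1)] countable_rat)
  moreover have "L \<in> (\<Union>(C, r)\<in>I. {L\<in>ncompacts. hausdist C L < r})" if "L \<in> U" for L
  proof -
    obtain e where e: "e > 0" "\<And>L'. L' \<in> ncompacts \<Longrightarrow> hausdist L L' < e \<Longrightarrow> L' \<in> U"
      using assms \<open>L \<in> U\<close> unfolding hausdorff_open_def by blast
    have L: "L \<in> ncompacts"
      using assms \<open>L \<in> U\<close> unfolding hausdorff_open_def by blast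
    obtain C where C: "finite C" "C \<subseteq> D" "C \<noteq> {}" "hausdist C L < e/3"
      using finite_subset_hausdist_less[OF D(2) L, of "e/3"] e(1) by auto
    obtain r where r: "r \<in> \<rat>" "e/3 < r" "r < 2*e/3"
      using Rats_dense_in_real[of "e/3" "2*e/3"] e(1) by auto
    have "C \<in> ncompacts"
      using C finite_imp_compact by (auto simp: ncompacts_def)
    have "L' \<in> U" if "L' \<in> ncompacts" "hausdist C L' < r" for L'
    proof -
      have "hausdist L L' \<le> e/3 + r"
        using hausdist_triangle_less[OF L \<open>C \<in> ncompacts\<close> that(1)] C(4) that(2)
        by (simp add: hausdist_commute)
      then show ?thesis
        using e(2) that(1) r by force
    qed
    then have "(C, r) \<in> I"
      using C r unfolding I_def by auto
    then show ?thesis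
      using C(4) r L by force
  qed
  ultimately show ?thesis
    using that[of I] assms unfolding I_def hausdorff_open_def by blast
qed

lemma measurable_KspaceI:
  fixes F :: "'b \<Rightarrow> 'a::{metric_space,second_countable_topology} set"
  assumes "F \<in> space M \<rightarrow> ncompacts"
    and "\<And>C. finite C \<Longrightarrow> C \<noteq> {} \<Longrightarrow> (\<lambda>\<omega>. hausdist C (F \<omega>)) \<in> borel_measurable M"
  shows "F \<in> measurable M Kspace"
  unfolding Kspace_def
proof (rule measurable_measure_of)
  fix U :: "'a set set"
  assume "U \<in> {U. hausdorff_open U}"
  then obtain I where I: "countable I" "\<And>C r. (C, r) \<in> I \<Longrightarrow> finite C \<and> C \<noteq> {}"
    and U: "U = (\<Union>(C, r)\<in>I. {L\<in>ncompacts. hausdist C L < r})"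
    using hausdorff_open_countable_ball_Union by blast
  have "F -` U \<inter> space M = (\<Union>(C, r)\<in>I. {\<omega>\<in>space M. hausdist C (F \<omega>) < r})"
    using assms(1) unfolding U by auto
  also have "\<dots> \<in> sets M"
    using I assms(2) by (intro sets.countable_UN'') (auto simp: borel_measurable_iff_less)
  finally show "F -` U \<inter> space M \<in> sets M" .
qed (use assms(1) in \<open>auto simp: hausdorff_open_def\<close>)

section \<open>Upper hemicontinuous maps are measurable\<close>

definition hausdorff_upper_hemicontinuous :: "('a::metric_space set \<Rightarrow> 'b::metric_space set) \<Rightarrow> bool"
  where "hausdorff_upper_hemicontinuous G \<longleftrightarrow>
    (\<forall>L\<in>ncompacts. \<forall>e>0. \<exists>d>0. \<forall>L'\<in>ncompacts. hausdist L L' < d \<longrightarrow>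
       (\<forall>y\<in>G L'. \<exists>x\<in>G L. dist y x < e))"

lemma hausdorff_upper_hemicontinuousE:
  assumes "hausdorff_upper_hemicontinuous G" "L \<in> ncompacts" "e > 0"
  obtains d where "d > 0"
    and "\<And>L' y. L' \<in> ncompacts \<Longrightarrow> hausdist L L' < d \<Longrightarrow> y \<in> G L' \<Longrightarrow> \<exists>x\<in>G L. dist y x < e"
  using assms unfolding hausdorff_upper_hemicontinuous_def by metis

lemma hausdorff_open_setdist_greater:
  assumes G: "hausdorff_upper_hemicontinuous G" "G ` ncompacts \<subseteq> ncompacts"
  shows "hausdorff_open {L\<in>ncompacts. a < setdist {x} (G L)}"
  unfolding hausdorff_open_def
proof (intro conjI ballI)
  fix L assume "L \<in> {L\<in>ncompacts. a < setdist {x} (G L)}"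
  then have L: "L \<in> ncompacts" and a: "a < setdist {x} (G L)" by auto
  define e where "e = (setdist {x} (G L) - a) / 2"
  obtain d where d: "d > 0"
    and near: "\<And>L' y. L' \<in> ncompacts \<Longrightarrow> hausdist L L' < d \<Longrightarrow> y \<in> G L' \<Longrightarrow> \<exists>z\<in>G L. dist y z < e"
    using hausdorff_upper_hemicontinuousE[OF G(1) L, of e] a unfolding e_def by auto
  have "a < setdist {x} (G L')" if L': "L' \<in> ncompacts" "hausdist L L' < d" for L'
  proof -
    have "setdist {x} (G L) - e \<le> setdist {x} (G L')"
    proof (rule le_setdistI)
      fix u y assume "u \<in> {x}" "y \<in> G L'"
      then obtain z where "z \<in> G L" "dist y z < e"
        using near L' by blast
      then show "setdist {x} (G L) - e \<le> dist u y"
        using setdist_le_dist[of x "{x}" z "G L"] dist_triangle[of x z y] \<open>u \<in> {x}\<close>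
        by (simp add: dist_commute)
    qed (use G(2) L' in \<open>auto simp: ncompacts_def\<close>)
    then show ?thesis
      using a unfolding e_def by argo
  qed
  then show "\<exists>d>0. \<forall>L'\<in>ncompacts. hausdist L L' < d \<longrightarrow> L' \<in> {L\<in>ncompacts. a < setdist {x} (G L)}"
    using d by blast
qed auto

lemma hausdorff_open_Sup_setdist_less:
  fixes G :: "'a::metric_space set \<Rightarrow> 'b::metric_space set"
  assumes G: "hausdorff_upper_hemicontinuous G" "G ` ncompacts \<subseteq> ncompacts"
  shows "hausdorff_open {L\<in>ncompacts. (SUP y\<in>G L. setdist {y} C) < a}"
  unfolding hausdorff_open_def
proof (intro conjI ballI)
  fix L assume "L \<in> {L\<in>ncompacts. (SUP y\<in>G L. setdist {y} C) < a}"
  then have L: "L \<in> ncompacts" and a: "(SUP y\<in>G L. setdist {y} C) < a" by auto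
  define e where "e = (a - (SUP y\<in>G L. setdist {y} C)) / 2"
  obtain d where d: "d > 0"
    and near: "\<And>L' y. L' \<in> ncompacts \<Longrightarrow> hausdist L L' < d \<Longrightarrow> y \<in> G L' \<Longrightarrow> \<exists>z\<in>G L. dist y z < e"
    using hausdorff_upper_hemicontinuousE[OF G(1) L, of e] a unfolding e_def by auto
  have GL: "compact (G L)"
    using G(2) L by (auto simp: ncompacts_def)
  have "(SUP y\<in>G L'. setdist {y} C) < a" if L': "L' \<in> ncompacts" "hausdist L L' < d" for L'
  proof -
    have "(SUP y\<in>G L'. setdist {y} C) \<le> (SUP y\<in>G L. setdist {y} C) + e"
    proof (rule cSUP_least)
      fix y assume "y \<in> G L'"
      then obtain z where z: "z \<in> G L" "dist y z < e"
        using near L' by blast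
      have "setdist {y} C \<le> setdist {z} C + dist y z"
        using setdist_Lipschitz[of y C z] by linarith
      moreover have "setdist {z} C \<le> (SUP y\<in>G L. setdist {y} C)"
        by (intro cSUP_upper z(1) bdd_above_setdist_image GL)
      ultimately show "setdist {y} C \<le> (SUP y\<in>G L. setdist {y} C) + e"
        using z(2) by linarith
    qed (use G(2) L' in \<open>auto simp: ncompacts_def\<close>)
    then show ?thesis
      using a unfolding e_def by argo
  qed
  then show "\<exists>d>0. \<forall>L'\<in>ncompacts. hausdist L L' < d \<longrightarrow>
      L' \<in> {L\<in>ncompacts. (SUP y\<in>G L. setdist {y} C) < a}"
    using d by blast
qed auto

lemma borel_measurable_hausdist_upper_hemicontinuous:
  fixes G :: "'a::metric_space set \<Rightarrow> 'b::metric_space set"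
  assumes G: "hausdorff_upper_hemicontinuous G" "G ` ncompacts \<subseteq> ncompacts"
    and "finite C"
  shows "(\<lambda>L. hausdist C (G L)) \<in> borel_measurable Kspace"
proof -
  have "(\<lambda>L. setdist {x} (G L)) \<in> borel_measurable Kspace" for x
    unfolding borel_measurable_iff_greater space_Kspace
    using sets_Kspace_hausdorff_open hausdorff_open_setdist_greater[OF G] by blast
  then have "(\<lambda>L. SUP x\<in>C. setdist {x} (G L)) \<in> borel_measurable Kspace"
    using \<open>finite C\<close> by (intro borel_measurable_cSUP) (auto intro: countable_finite)
  moreover have "(\<lambda>L. SUP y\<in>G L. setdist {y} C) \<in> borel_measurable Kspace"
    unfolding borel_measurable_iff_less space_Kspace
    using sets_Kspace_hausdorff_open hausdorff_open_Sup_setdist_less[OF G] by blast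
  ultimately show ?thesis
    unfolding hausdist_def by (intro borel_measurable_max)
qed

lemma measurable_Kspace_upper_hemicontinuous:
  fixes G :: "'a::metric_space set \<Rightarrow> 'b::{metric_space,second_countable_topology} set"
  assumes "hausdorff_upper_hemicontinuous G" "G ` ncompacts \<subseteq> ncompacts"
  shows "G \<in> measurable Kspace Kspace"
  using assms
  by (intro measurable_KspaceI borel_measurable_hausdist_upper_hemicontinuous)
    (auto simp: space_Kspace)

section \<open>Polynomially convex hulls\<close>

lemma continuous_on_polynomial_fun: "polynomial_fun p \<Longrightarrow> continuous_on S p"
  unfolding polynomial_fun_def by (auto intro!: continuous_intros)

lemma polynomial_fun_component: "polynomial_fun (\<lambda>z::complex^'n. z $ i)"
proof -
  define \<alpha> :: "'n \<Rightarrow> nat" where "\<alpha> = (\<lambda>j. if j = i then 1 else 0)"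
  have "(\<Prod>j\<in>UNIV. (z $ j) ^ \<alpha> j) = z $ i" for z :: "complex^'n"
    unfolding \<alpha>_def by (simp add: if_distrib[of "power _"] prod.delta cong: if_cong)
  then show ?thesis
    unfolding polynomial_fun_def by (intro exI[of _ "{\<alpha>}"] exI[of _ "\<lambda>_. 1"]) auto
qed

lemma bdd_above_norm_polynomial_fun:
  "compact L \<Longrightarrow> polynomial_fun p \<Longrightarrow> bdd_above ((\<lambda>x. cmod (p x)) ` L)"
  by (intro bounded_imp_bdd_above compact_imp_bounded compact_continuous_image
      continuous_on_norm continuous_on_polynomial_fun)

lemma subset_poly_hull: "compact L \<Longrightarrow> L \<subseteq> poly_hull L"
  unfolding poly_hull_def by (auto intro: cSUP_upper bdd_above_norm_polynomial_fun)

lemma closed_poly_hull: "closed (poly_hull L)"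
proof -
  have "poly_hull L = (\<Inter>p\<in>{p. polynomial_fun p}. {z. cmod (p z) \<le> (SUP x\<in>L. cmod (p x))})"
    unfolding poly_hull_def by auto
  then show ?thesis
    by (auto intro!: closed_INT closed_Collect_le continuous_intros continuous_on_polynomial_fun)
qed

lemma poly_hull_subset_cball:
  fixes L :: "(complex^'n) set"
  assumes "L \<noteq> {}" "L \<subseteq> cball 0 R"
  shows "poly_hull L \<subseteq> cball 0 (real CARD('n) * R)"
proof
  fix z assume z: "z \<in> poly_hull L"
  have component: "cmod (z $ i) \<le> R" for i
  proof -
    have "cmod (z $ i) \<le> (SUP x\<in>L. cmod (x $ i))"
      using z polynomial_fun_component[of i] unfolding poly_hull_def by auto
    also have "\<dots> \<le> R"
    proof (rule cSUP_least[OF assms(1)])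
      fix x assume "x \<in> L"
      then have "norm x \<le> R"
        using assms(2) by auto
      then show "cmod (x $ i) \<le> R"
        using Finite_Cartesian_Product.norm_nth_le[of x i] by linarith
    qed
    finally show ?thesis .
  qed
  have "norm z \<le> (\<Sum>i\<in>UNIV. cmod (z $ i))"
    unfolding norm_vec_def by (rule L2_set_le_sum) simp
  also have "\<dots> \<le> (\<Sum>i\<in>(UNIV::'n set). R)"
    by (intro sum_mono component)
  finally show "z \<in> cball 0 (real CARD('n) * R)"
    by simp
qed

lemma poly_hull_in_ncompacts:
  fixes L :: "(complex^'n) set"
  assumes "L \<in> ncompacts"
  shows "poly_hull L \<in> ncompacts"
proof -
  have L: "compact L" "L \<noteq> {}"
    using assms by (auto simp: ncompacts_def)
  obtain R where "L \<subseteq> ball 0 R"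
    using bounded_subset_ballD[OF compact_imp_bounded[OF L(1)]] by blast
  then have "poly_hull L \<subseteq> cball 0 (real CARD('n) * R)"
    using poly_hull_subset_cball[OF L(2)] ball_subset_cball[of 0 R] by (meson order_trans)
  then have "compact (poly_hull L)"
    using closed_poly_hull bounded_subset[OF bounded_cball] compact_eq_bounded_closed by blast
  moreover have "poly_hull L \<noteq> {}"
    using subset_poly_hull[OF L(1)] L(2) by blast
  ultimately show ?thesis
    by (simp add: ncompacts_def)
qed

lemma poly_hull_subset_sublevel:
  fixes L :: "(complex^'n) set"
  assumes "L \<in> ncompacts" "polynomial_fun p" "\<And>x. x \<in> L \<Longrightarrow> cmod (p x) < t"
  shows "poly_hull L \<subseteq> {z. cmod (p z) < t}"
proof
  fix z assume "z \<in> poly_hull L"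
  then have "cmod (p z) \<le> (SUP x\<in>L. cmod (p x))"
    using assms(2) unfolding poly_hull_def by blast
  also have "\<dots> < t"
    using assms(1,3) continuous_on_norm[OF continuous_on_polynomial_fun[OF assms(2)]]
    by (intro cSUP_less_compact) (auto simp: ncompacts_def)
  finally show "z \<in> {z. cmod (p z) < t}"
    by simp
qed

lemma compact_outside_poly_hull_finite_cover:
  fixes F L :: "(complex^'n) set"
  assumes "compact F" "F \<inter> poly_hull L = {}"
  obtains T where "finite T" "T \<subseteq> {(p, t). polynomial_fun p \<and> (SUP x\<in>L. cmod (p x)) < t}"
    and "F \<subseteq> (\<Union>(p, t)\<in>T. {z. t < cmod (p z)})"
proof -
  define S where "S = {(p, t). polynomial_fun p \<and> (SUP x\<in>L. cmod (p x)) < t}"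
  have "F \<subseteq> (\<Union>(p, t)\<in>S. {z. t < cmod (p z)})"
  proof
    fix z assume "z \<in> F"
    then have "z \<notin> poly_hull L"
      using assms(2) by blast
    then have "\<exists>p. polynomial_fun p \<and> (SUP x\<in>L. cmod (p x)) < cmod (p z)"
      unfolding poly_hull_def by (simp add: not_le)
    then obtain p where p: "polynomial_fun p" "(SUP x\<in>L. cmod (p x)) < cmod (p z)"
      by blast
    moreover obtain t where "(SUP x\<in>L. cmod (p x)) < t" "t < cmod (p z)"
      using dense p(2) by blast
    ultimately show "z \<in> (\<Union>(p, t)\<in>S. {z. t < cmod (p z)})"
      unfolding S_def by blast
  qed
  moreover have "open (case \<tau> of (p, t) \<Rightarrow> {z. t < cmod (p z)})" if "\<tau> \<in> S" for \<tau>
    using that unfolding S_def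
    by (cases \<tau>) (auto intro!: open_Collect_less continuous_on_const continuous_on_norm continuous_on_polynomial_fun)
  ultimately obtain T where "T \<subseteq> S" "finite T" "F \<subseteq> (\<Union>(p, t)\<in>T. {z. t < cmod (p z)})"
    using compactE_image[OF assms(1), of S "\<lambda>(p, t). {z. t < cmod (p z)}"] by blast
  then show ?thesis
    using that unfolding S_def by blast
qed

lemma poly_hull_disjoint_compact_nhd:
  fixes L F :: "(complex^'n) set"
  assumes "compact L" "compact F" "F \<inter> poly_hull L = {}"
  obtains U where "open U" "L \<subseteq> U"
    and "\<And>L'. L' \<in> ncompacts \<Longrightarrow> L' \<subseteq> U \<Longrightarrow> F \<inter> poly_hull L' = {}"
proof -
  obtain T where T: "finite T"
    "T \<subseteq> {(p, t). polynomial_fun p \<and> (SUP x\<in>L. cmod (p x)) < t}"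
    "F \<subseteq> (\<Union>(p, t)\<in>T. {z. t < cmod (p z)})"
    by (rule compact_outside_poly_hull_finite_cover[OF assms(2,3)])
  have T_poly: "polynomial_fun p" "(SUP x\<in>L. cmod (p x)) < t" if "(p, t) \<in> T" for p t
    using T(2) that by blast+
  define U where "U = (\<Inter>(p, t)\<in>T. {z. cmod (p z) < t})"
  have U_bound: "cmod (p z) < t" if "z \<in> U" "(p, t) \<in> T" for z p t
    using that unfolding U_def by blast
  have "open U"
    unfolding U_def using T(1) T_poly
    by (intro open_INT)
      (auto intro!: open_Collect_less continuous_on_const continuous_on_norm continuous_on_polynomial_fun)
  moreover have "L \<subseteq> U"
  proof -
    have "cmod (p x) < t" if "(p, t) \<in> T" "x \<in> L" for p t x
    proof -
      have "cmod (p x) \<le> (SUP x\<in>L. cmod (p x))"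
        using T_poly(1)[OF that(1)] assms(1) that(2)
        by (intro cSUP_upper bdd_above_norm_polynomial_fun)
      then show ?thesis
        using T_poly(2)[OF that(1)] by linarith
    qed
    then show ?thesis
      unfolding U_def by blast
  qed
  moreover have "F \<inter> poly_hull L' = {}" if L': "L' \<in> ncompacts" "L' \<subseteq> U" for L'
  proof -
    have "poly_hull L' \<subseteq> {z. cmod (p z) < t}" if "(p, t) \<in> T" for p t
      using L' U_bound[OF _ that] T_poly(1)[OF that]
      by (intro poly_hull_subset_sublevel) auto
    then show ?thesis
      using T(3) by fastforce
  qed
  ultimately show ?thesis
    using that by blast
qed

lemma poly_hull_subset_thickening_nhd:
  fixes L :: "(complex^'n) set"
  assumes L: "L \<in> ncompacts" and "e > 0"
  obtains U where "open U" "L \<subseteq> U"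
    and "\<And>L'. L' \<in> ncompacts \<Longrightarrow> L' \<subseteq> U \<Longrightarrow> poly_hull L' \<subseteq> (\<Union>x\<in>poly_hull L. ball x e)"
proof -
  have "compact L"
    using L by (simp add: ncompacts_def)
  then obtain R where R: "L \<subseteq> ball 0 R"
    using bounded_subset_ballD[OF compact_imp_bounded, of L 0] by blast
  \<comment> \<open>The radius is chosen so that this ball contains the hulls of all subsets of \<open>ball 0 R\<close>.\<close>
  define F where "F = cball 0 (real CARD('n) * R) \<inter> {z. e \<le> setdist {z} (poly_hull L)}"
  have "compact F"
    unfolding F_def
    by (intro compact_Int_closed compact_cball closed_Collect_le continuous_on_const continuous_on_setdist)
  moreover have "F \<inter> poly_hull L = {}"
    using \<open>e > 0\<close> unfolding F_def by (auto simp: setdist_eq_0I)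
  ultimately obtain U where U: "open U" "L \<subseteq> U"
    and disjoint: "\<And>L'. L' \<in> ncompacts \<Longrightarrow> L' \<subseteq> U \<Longrightarrow> F \<inter> poly_hull L' = {}"
    using poly_hull_disjoint_compact_nhd[OF \<open>compact L\<close>] by blast
  have "poly_hull L \<noteq> {}"
    using poly_hull_in_ncompacts[OF L] by (auto simp: ncompacts_def)
  show ?thesis
  proof (rule that)
    show "open (ball 0 R \<inter> U)" "L \<subseteq> ball 0 R \<inter> U"
      using U R by auto
  next
    fix L' assume L': "L' \<in> ncompacts" "L' \<subseteq> ball 0 R \<inter> U"
    show "poly_hull L' \<subseteq> (\<Union>x\<in>poly_hull L. ball x e)"
    proof
      fix y assume y: "y \<in> poly_hull L'"
      have "L' \<subseteq> cball 0 R"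
        using L'(2) ball_subset_cball[of 0 R] by blast
      then have "y \<in> cball 0 (real CARD('n) * R)"
        using poly_hull_subset_cball[of L' R] L'(1) y by (auto simp: ncompacts_def)
      moreover have "y \<notin> F"
        using disjoint[OF L'(1)] L'(2) y by blast
      ultimately have "setdist {y} (poly_hull L) < e"
        unfolding F_def by auto
      then obtain x where "x \<in> poly_hull L" "dist y x < e"
        using setdist_ltE[of "{y}" "poly_hull L" e] \<open>poly_hull L \<noteq> {}\<close> by blast
      then show "y \<in> (\<Union>x\<in>poly_hull L. ball x e)"
        by (metis UN_iff dist_commute mem_ball)
    qed
  qed
qed

lemma hausdorff_upper_hemicontinuous_poly_hull:
  "hausdorff_upper_hemicontinuous (poly_hull :: (complex^'n) set \<Rightarrow> _)"
  unfolding hausdorff_upper_hemicontinuous_def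
proof (intro ballI allI impI)
  fix L :: "(complex^'n) set" and e :: real
  assume L: "L \<in> ncompacts" and "e > 0"
  obtain U where U: "open U" "L \<subseteq> U"
    and hull: "\<And>L'. L' \<in> ncompacts \<Longrightarrow> L' \<subseteq> U \<Longrightarrow> poly_hull L' \<subseteq> (\<Union>x\<in>poly_hull L. ball x e)"
    using poly_hull_subset_thickening_nhd[OF L \<open>e > 0\<close>] by blast
  obtain d where d: "d > 0" "\<And>L'. L' \<in> ncompacts \<Longrightarrow> hausdist L L' < d \<Longrightarrow> L' \<subseteq> U"
    using hausdist_near_subset_open[OF L U] by blast
  have "\<exists>x\<in>poly_hull L. dist y x < e"
    if L': "L' \<in> ncompacts" "hausdist L L' < d" and y: "y \<in> poly_hull L'" for L' y
  proof -
    obtain x where "x \<in> poly_hull L" "y \<in> ball x e"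
      using hull[OF L'(1) d(2)[OF L']] y by blast
    then show ?thesis
      by (metis dist_commute mem_ball)
  qed
  then show "\<exists>d>0. \<forall>L'\<in>ncompacts. hausdist L L' < d \<longrightarrow>
      (\<forall>y\<in>poly_hull L'. \<exists>x\<in>poly_hull L. dist y x < e)"
    using d(1) by blast
qed

theorem theorem6p13:
  fixes M :: "'a measure" and K :: "'a \<Rightarrow> (complex ^ 'n) set"
  assumes "K \<in> measurable M Kspace"
  shows "(\<lambda>\<omega>. poly_hull (K \<omega>)) \<in> measurable M Kspace"
proof -
  have "poly_hull \<in> measurable Kspace (Kspace :: (complex^'n) set measure)"
    using hausdorff_upper_hemicontinuous_poly_hull poly_hull_in_ncompacts
    by (intro measurable_Kspace_upper_hemicontinuous) auto
  then show ?thesis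
    by (rule measurable_compose[OF assms])
qed

end
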